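(* Let $(M,g)$ be any Riemannian $n$-manifold and $p,q\in\mathbb R$. If $n\geq 3$, then $\tilde K(\Pi)>0$ for every vertical 2-plane $\Pi$ in $T(BM_q)$ (equivalently, the metric induced by $h_{p,q}$ on the fibres $T_xM\cap BM_q$ has positive sectional curvature) if and only if $(p,q)\in\Gamma$. If $n=2$, the same holds if and only if $(p,q)\in\Gamma'$.
   Context: $\langle\cdot,\cdot\rangle=g$, $|e|^2=\langle e,e\rangle$, $\omega(e)=(1+|e|^2)^{-1}$. $h_{p,q}$ is the generalised Cheeger–Gromoll metric on $TM$: $h_{p,q}(X^h,Y^h)=\langle X,Y\rangle$, $h_{p,q}(X^h,Y^v)=0$, $h_{p,q}(X^v,Y^v)=\omega^p(\langle X,Y\rangle+q\langle X,e\rangle\langle Y,e\rangle)$, where $X^h,X^v$ are horizontal and vertical lifts w.r.t. the Levi-Civita connection; it is Riemannian on $BM_q=\{e:q|e|^2>-1\}$; $\tilde K$ is its sectional curvature; a 2-plane is vertical if it is spanned by vertical vectors. Let $\lambda(p)=8(1-p)/(8+p)$ for $p\neq-8$. Define $\Gamma_+^1=\{(p,q): -8<p\le -2,\ q>\lambda(p)\}$, $\Gamma_+^2=\{(p,q): -2\le p\le 0,\ 2p+q>0\}$, $\Gamma_+^3=\{(p,q): 0\le p\le 1,\ q>0\}$, $\Gamma_+=\Gamma_+^1\cup\Gamma_+^2\cup\Gamma_+^3$; $\Gamma_-=\{(p,q): p+q=1,\ q<0\}$, $\Gamma_-'=\{(p,q): p+q\ge1,\ q<0\}$, $\Gamma_Z=\{(p,0):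 0<p\le 2\}$, $\Gamma_Z'=\{(p,0): p>0\}$; $\Gamma=\Gamma_-\cup\Gamma_Z\cup\Gamma_+$ and $\Gamma'=\Gamma_-'\cup\Gamma_Z'\cup\Gamma_+$. *)

theory Defs
  imports "HOL-Analysis.Analysis"
begin

text \<open>A Riemannian metric on (an open subset of) a Euclidean vector space 'a is
  modelled as G :: 'a \<Rightarrow> 'a \<Rightarrow> 'a \<Rightarrow> real, with G e X Y the inner product of
  the tangent vectors X, Y at the point e (tangent spaces identified with 'a).\<close>

definition dder :: "('a::real_normed_vector \<Rightarrow> real) \<Rightarrow> 'a \<Rightarrow> 'a \<Rightarrow> real" where
  "dder f e X = deriv (\<lambda>t. f (e + t *\<^sub>R X)) 0"

definition vdder :: "('a::real_normed_vector \<Rightarrow> 'a) \<Rightarrow> 'a \<Rightarrow> 'a \<Rightarrow> 'a" where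
  "vdder W e X = vector_derivative (\<lambda>t. W (e + t *\<^sub>R X)) (at 0)"

text \<open>Levi-Civita connection on constant (coordinate) vector fields, via the Koszul
  formula: G(\<nabla>_X Y, Z) = 1/2 (X G(Y,Z) + Y G(X,Z) - Z G(X,Y)).\<close>
definition LC :: "('a::real_normed_vector \<Rightarrow> 'a \<Rightarrow> 'a \<Rightarrow> real) \<Rightarrow> 'a \<Rightarrow> 'a \<Rightarrow> 'a \<Rightarrow> 'a" where
  "LC G e X Y = (THE V. \<forall>Z. G e V Z =
      (dder (\<lambda>x. G x Y Z) e X + dder (\<lambda>x. G x X Z) e Y - dder (\<lambda>x. G x X Y) e Z) / 2)"

definition cov :: "('a::real_normed_vector \<Rightarrow> 'a \<Rightarrow> 'a \<Rightarrow> real) \<Rightarrow> ('a \<Rightarrow> 'a) \<Rightarrow> 'a \<Rightarrow> 'a \<Rightarrow> 'a" where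
  "cov G W e X = vdder W e X + LC G e X (W e)"

text \<open>Curvature R(X,Y)Z = \<nabla>_X\<nabla>_Y Z - \<nabla>_Y\<nabla>_X Z for constant fields (bracket zero).\<close>
definition curv :: "('a::real_normed_vector \<Rightarrow> 'a \<Rightarrow> 'a \<Rightarrow> real) \<Rightarrow> 'a \<Rightarrow> 'a \<Rightarrow> 'a \<Rightarrow> 'a \<Rightarrow> 'a" where
  "curv G e X Y Z = cov G (\<lambda>x. LC G x Y Z) e X - cov G (\<lambda>x. LC G x X Z) e Y"

definition sec_curv :: "('a::real_normed_vector \<Rightarrow> 'a \<Rightarrow> 'a \<Rightarrow> real) \<Rightarrow> 'a \<Rightarrow> 'a \<Rightarrow> 'a \<Rightarrow> real" where
  "sec_curv G e X Y = G e (curv G e X Y Y) X / (G e X X * G e Y Y - (G e X Y)\<^sup>2)"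

definition omega :: "'a::real_inner \<Rightarrow> real" where
  "omega e = 1 / (1 + (norm e)\<^sup>2)"

text \<open>The generalised Cheeger--Gromoll metric restricted to a fibre T_xM (identified
  isometrically with the Euclidean space 'a): vertical part of h_{p,q}.\<close>
definition hpq_fib :: "real \<Rightarrow> real \<Rightarrow> 'a::real_inner \<Rightarrow> 'a \<Rightarrow> 'a \<Rightarrow> real" where
  "hpq_fib p q e X Y = (omega e) powr p * (inner X Y + q * inner X e * inner Y e)"

definition BMq :: "real \<Rightarrow> 'a::real_inner set" where
  "BMq q = {e. q * (norm e)\<^sup>2 > -1}"

definition lam :: "real \<Rightarrow> real" where
  "lam p = 8 * (1 - p) / (8 + p)"

definition Gamma_plus :: "(real \<times> real) set" where
  "Gamma_plus =
     {(p,q). -8 < p \<and> p \<le> -2 \<and> q > lam p}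
   \<union> {(p,q). -2 \<le> p \<and> p \<le> 0 \<and> 2*p + q > 0}
   \<union> {(p,q). 0 \<le> p \<and> p \<le> 1 \<and> q > 0}"

definition Gamma_minus :: "(real \<times> real) set" where
  "Gamma_minus = {(p,q). p + q = 1 \<and> q < 0}"

definition Gamma_minus' :: "(real \<times> real) set" where
  "Gamma_minus' = {(p,q). p + q \<ge> 1 \<and> q < 0}"

definition Gamma_Z :: "(real \<times> real) set" where
  "Gamma_Z = {(p,q). q = 0 \<and> 0 < p \<and> p \<le> 2}"

definition Gamma_Z' :: "(real \<times> real) set" where
  "Gamma_Z' = {(p,q). q = 0 \<and> 0 < p}"

definition Gamma :: "(real \<times> real) set" where
  "Gamma = Gamma_minus \<union> Gamma_Z \<union> Gamma_plus"

definition Gamma' :: "(real \<times> real) set" where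
  "Gamma' = Gamma_minus' \<union> Gamma_Z' \<union> Gamma_plus"

end

theory Submission
  imports Defs
begin

text \<open>On a fibre, h_{p,q} is omega^p times the Euclidean metric perturbed by q<e,.>^2; its
  Levi-Civita connection is explicit (solve the Koszul formula), hence so is the curvature.
  For the plane spanned by X, Y at e, put s = |e|^2, G = gram X Y and P = gram_proj e X Y,
  which is G times the squared length of the projection of e onto the plane, so 0 <= P <= s G.
  The sectional curvature has the sign of  p (p - 2 + q - q s) P + T(s) G, and

    s (p (p - 2 + q - q s) P + T(s) G) = Q(s) P + T(s) (s G - P)

  with Q = radial_poly p q, T = orth_poly p q.  Planes containing e (P = s G) see Q alone and
  planes orthogonal to e (P = 0) see T alone, so all vertical curvatures are positive iff Q and
  T are positive on the range {s >= 0, 1 + q s > 0} of |e|^2 on BM_q; in dimension 2 every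
  plane contains e and only Q matters.  Gamma' (resp. Gamma) is exactly the set of (p, q) for
  which the quadratic Q (resp. Q and T) is positive on that range.\<close>

lemma omega_pos: "omega e > 0"
  unfolding omega_def by (simp add: add_pos_nonneg)

lemma omega_powr_eq: "omega (y::'a::real_inner) powr p = (1 + inner y y) powr (-p)"
proof -
  have "1 + inner y y > 0" by (smt (verit) inner_ge_zero)
  then show ?thesis unfolding omega_def
    by (simp add: power2_norm_eq_inner powr_divide powr_minus_divide)
qed

lemma hpq_fib_along_line: "hpq_fib p q (e + t *\<^sub>R X) U V =
   (1 + (inner e e + 2*t*inner X e + t^2 * inner X X)) powr (-p) *
   (inner U V + q * (inner U e + t * inner U X) * (inner V e + t * inner V X))"
  unfolding hpq_fib_def omega_powr_eq
  by (simp add: inner_add_left inner_add_right inner_commute algebra_simps power2_eq_square)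

lemma dder_hpq_fib:
  fixes e X U V :: "'a::real_inner"
  shows "dder (\<lambda>x. hpq_fib p q x U V) e X = omega e powr p *
     (-2*p*inner X e/(1+inner e e)*(inner U V + q*inner U e*inner V e)
      + q*(inner U X*inner V e + inner U e*inner V X))"
proof -
  let ?g = "\<lambda>t::real. 1 + (inner e e + 2*t*inner X e + t^2 * inner X X)"
  let ?k = "\<lambda>t::real. inner U V + q * (inner U e + t * inner U X) * (inner V e + t * inner V X)"
  let ?k' = "q*(inner U X*inner V e + inner U e*inner V X)"
  have g0: "?g 0 > 0" by (simp add: add_pos_nonneg)
  have dg: "(?g has_real_derivative 2*inner X e) (at 0)"
    by (auto intro!: derivative_eq_intros)
  have dk: "(?k has_real_derivative ?k') (at 0)"
    by (auto intro!: derivative_eq_intros simp: algebra_simps)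
  have "((\<lambda>t. ?g t powr (-p) * ?k t) has_real_derivative
      (-p) * ?g 0 powr (-p - 1) * (2*inner X e) * ?k 0 + ?g 0 powr (-p) * ?k') (at 0)"
    using DERIV_mult[OF DERIV_fun_powr[OF dg g0, of "-p"] dk] by (simp add: ac_simps)
  then have "dder (\<lambda>x. hpq_fib p q x U V) e X =
      (-p) * ?g 0 powr (-p - 1) * (2*inner X e) * ?k 0 + ?g 0 powr (-p) * ?k'"
    unfolding dder_def hpq_fib_along_line by (rule DERIV_imp_deriv)
  also have "?g 0 powr (-p - 1) = ?g 0 powr (-p) / (1 + inner e e)"
    using g0 by (simp add: powr_diff)
  finally show ?thesis
    unfolding omega_powr_eq[of e] by (simp add: field_simps)
qed

lemma hpq_fib_pos:
  fixes x W :: "'a::real_inner"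
  assumes "1 + q*inner x x > 0" "W \<noteq> 0"
  shows "hpq_fib p q x W W > 0"
proof -
  have "inner W W + q * (inner W x)^2 > 0"
  proof (cases "q \<ge> 0")
    case True then show ?thesis using assms(2) by (simp add: add_pos_nonneg)
  next
    case False
    have "q * (inner W x)^2 \<ge> q * (inner W W * inner x x)"
      using Cauchy_Schwarz_ineq[of W x] False by (simp add: mult_left_mono_neg)
    moreover have "inner W W * (1 + q*inner x x) > 0" using assms by simp
    ultimately show ?thesis by (simp add: algebra_simps)
  qed
  then show ?thesis unfolding hpq_fib_def using omega_pos[of x] by (simp add: power2_eq_square)
qed

definition hpq_conn :: "real \<Rightarrow> real \<Rightarrow> 'a::real_inner \<Rightarrow> 'a \<Rightarrow> 'a \<Rightarrow> 'a" where
  "hpq_conn p q x U V =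
     ((-p/(1+inner x x))*inner U x) *\<^sub>R V + ((-p/(1+inner x x))*inner V x) *\<^sub>R U
     + (((q + p/(1+inner x x))*inner U V + p/(1+inner x x)*q*inner U x*inner V x)
        / (1+q*inner x x)) *\<^sub>R x"

lemma hpq_conn_Koszul:
  fixes x U V Z :: "'a::real_inner"
  assumes "1 + q*inner x x > 0"
  shows "hpq_fib p q x (hpq_conn p q x U V) Z =
      (dder (\<lambda>x. hpq_fib p q x V Z) x U + dder (\<lambda>x. hpq_fib p q x U Z) x V
       - dder (\<lambda>x. hpq_fib p q x U V) x Z) / 2"
proof -
  txt \<open>Naming the inverses of the two denominators reduces the claim to a polynomial identity
    modulo R (1 + |x|^2) = 1 and B (1 + q |x|^2) = 1.\<close>
  define R where "R = 1/(1 + inner x x)"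
  define B where "B = 1/(1 + q*inner x x)"
  have "1 + inner x x > 0" by (simp add: add_pos_nonneg)
  then have r: "R * (1 + inner x x) = 1" "B * (1 + q*inner x x) = 1"
    using assms by (auto simp: R_def B_def)
  have d: "\<And>z. z/(1 + inner x x) = z*R" "\<And>z. z/(1 + q*inner x x) = z*B"
    by (auto simp: R_def B_def)
  have c: "inner x U = inner U x" "inner x V = inner V x" "inner x Z = inner Z x"
    "inner V U = inner U V" "inner Z U = inner U Z" "inner Z V = inner V Z"
    by (simp_all add: inner_commute)
  show ?thesis
    unfolding dder_hpq_fib unfolding hpq_fib_def hpq_conn_def
    apply (simp only: inner_add_left inner_scaleR_left c d)
    using r by algebra
qed

lemma LC_hpq_fib:
  fixes x U V :: "'a::real_inner"
  assumes x: "1 + q*inner x x > 0"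
  shows "LC (hpq_fib p q) x U V = hpq_conn p q x U V"
  unfolding LC_def
proof (rule the_equality)
  show "\<forall>Z. hpq_fib p q x (hpq_conn p q x U V) Z =
      (dder (\<lambda>x. hpq_fib p q x V Z) x U + dder (\<lambda>x. hpq_fib p q x U Z) x V
       - dder (\<lambda>x. hpq_fib p q x U V) x Z) / 2"
    using hpq_conn_Koszul[OF x] by blast
next
  fix W assume W: "\<forall>Z. hpq_fib p q x W Z =
      (dder (\<lambda>x. hpq_fib p q x V Z) x U + dder (\<lambda>x. hpq_fib p q x U Z) x V
       - dder (\<lambda>x. hpq_fib p q x U V) x Z) / 2"
  define D where "D = W - hpq_conn p q x U V"
  have "hpq_fib p q x D D = hpq_fib p q x W D - hpq_fib p q x (hpq_conn p q x U V) D"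
    unfolding D_def hpq_fib_def by (simp add: inner_diff_left algebra_simps)
  also have "\<dots> = 0"
    using spec[OF W, of D] hpq_conn_Koszul[OF x, of p U V D] by linarith
  finally show "W = hpq_conn p q x U V"
    using hpq_fib_pos[OF x, of D p] unfolding D_def by force
qed

text \<open>al0, alD and bi0, biD are the values at e and the derivatives along X of the
  coefficients -p/(1+|x|^2) and 1/(1+q|x|^2) of hpq_conn.\<close>

definition hpq_conn_deriv :: "real \<Rightarrow> real \<Rightarrow> 'a::real_inner \<Rightarrow> 'a \<Rightarrow> 'a \<Rightarrow> 'a \<Rightarrow> 'a" where
  "hpq_conn_deriv p q e X U V = (let s = inner e e; x = inner X e;
      al0 = -p/(1+s); alD = 2*p*x/(1+s)^2; bi0 = 1/(1+q * s); biD = -(2*q*x)/(1+q * s)^2;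
      uE = inner U e; vE = inner V e; uX = inner U X; vX = inner V X; uv = inner U V
    in (alD*uE + al0*uX) *\<^sub>R V + (alD * vE + al0 * vX) *\<^sub>R U
     + ((-alD*uv - q*(alD*uE * vE + al0*(uX * vE + uE * vX)))*bi0 + ((q-al0)*uv - al0*q*uE * vE)*biD) *\<^sub>R e
     + (((q-al0)*uv - al0*q*uE * vE)*bi0) *\<^sub>R X)"

lemma DERIV_const_div_norm_line:
  fixes e X :: "'a::real_inner"
  assumes "1 + a * inner e e \<noteq> 0"
  shows "((\<lambda>t. c / (1 + a * inner (e + t *\<^sub>R X) (e + t *\<^sub>R X))) has_real_derivative
    - 2 * a * c * inner X e / (1 + a * inner e e)^2) (at 0)"
proof -
  have "inner (e + t *\<^sub>R X) (e + t *\<^sub>R X) = inner e e + 2*t*inner X e + t^2*inner X X" for t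
    by (simp add: inner_add_left inner_add_right inner_commute power2_eq_square algebra_simps)
  then show ?thesis
    using assms by (auto intro!: derivative_eq_intros simp: power2_eq_square field_simps)
qed

lemma hpq_conn_has_vector_derivative:
  fixes e X U V :: "'a::real_inner"
  assumes e: "1 + q*inner e e > 0"
  shows "((\<lambda>t. hpq_conn p q (e + t *\<^sub>R X) U V) has_vector_derivative
    hpq_conn_deriv p q e X U V) (at 0)"
proof -
  define s where "s = inner e e"
  define x where "x = inner X e"
  define uE where "uE = inner U e"
  define vE where "vE = inner V e"
  define uX where "uX = inner U X"
  define vX where "vX = inner V X"
  define uv where "uv = inner U V"
  define al where "al = (\<lambda>t::real. -p/(1 + inner (e + t *\<^sub>R X) (e + t *\<^sub>R X)))"
  define bi where "bi = (\<lambda>t::real. 1/(1 + q*inner (e + t *\<^sub>R X) (e + t *\<^sub>R X)))"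
  have line: "hpq_conn p q (e + t *\<^sub>R X) U V =
     (al t * (uE + t*uX)) *\<^sub>R V + (al t * (vE + t * vX)) *\<^sub>R U
     + (((q - al t)*uv - al t*q*(uE + t*uX)*(vE + t * vX)) * bi t) *\<^sub>R (e + t *\<^sub>R X)" for t
    unfolding hpq_conn_def al_def bi_def
    by (simp add: inner_add_right uE_def vE_def uX_def vX_def uv_def inner_commute)
  have "1 + s > 0" unfolding s_def by (simp add: add_pos_nonneg)
  then have dal: "(al has_real_derivative (2*p*x/(1+s)^2)) (at 0)"
    using DERIV_const_div_norm_line[of 1 e "-p" X] unfolding al_def s_def x_def by simp
  have dbi: "(bi has_real_derivative (-(2*q*x)/(1+q * s)^2)) (at 0)"
    using DERIV_const_div_norm_line[of q e 1 X] e unfolding bi_def s_def x_def by simp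
  have al0: "al 0 = -p/(1+s)" and bi0: "bi 0 = 1/(1+q * s)" unfolding al_def bi_def s_def by simp_all
  have du: "((\<lambda>t. uE + t*uX) has_real_derivative uX) (at 0)"
    and dv: "((\<lambda>t. vE + t * vX) has_real_derivative vX) (at 0)"
    by (auto intro!: derivative_eq_intros)
  have da: "((\<lambda>t. al t * (uE + t*uX)) has_real_derivative (2*p*x/(1+s)^2*uE + (-p/(1+s))*uX)) (at 0)"
    using DERIV_mult[OF dal du] al0 by (simp add: algebra_simps)
  have db: "((\<lambda>t. al t * (vE + t * vX)) has_real_derivative
      (2*p*x/(1+s)^2 * vE + (-p/(1+s)) * vX)) (at 0)"
    using DERIV_mult[OF dal dv] al0 by (simp add: algebra_simps)
  have dn: "((\<lambda>t. (q - al t)*uv - al t*q*(uE + t*uX)*(vE + t * vX)) has_real_derivative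
      (-(2*p*x/(1+s)^2)*uv - q*((2*p*x/(1+s)^2)*uE * vE + (-p/(1+s))*(uX * vE + uE * vX)))) (at 0)"
    using al0 by (auto intro!: derivative_eq_intros dal du dv simp: algebra_simps)
  have dc: "((\<lambda>t. ((q - al t)*uv - al t*q*(uE + t*uX)*(vE + t * vX)) * bi t) has_real_derivative
      ((-(2*p*x/(1+s)^2)*uv - q*((2*p*x/(1+s)^2)*uE * vE + (-p/(1+s))*(uX * vE + uE * vX)))*(1/(1+q * s))
       + ((q - (-p/(1+s)))*uv - (-p/(1+s))*q*uE * vE)*(-(2*q*x)/(1+q * s)^2))) (at 0)"
    using DERIV_mult[OF dn dbi] al0 bi0 by (simp add: algebra_simps)
  have dline: "((\<lambda>t. e + t *\<^sub>R X) has_vector_derivative X) (at 0)"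
    by (auto intro!: derivative_eq_intros)
  have "((\<lambda>t. (al t * (uE + t*uX)) *\<^sub>R V + (al t * (vE + t * vX)) *\<^sub>R U
     + (((q - al t)*uv - al t*q*(uE + t*uX)*(vE + t * vX)) * bi t) *\<^sub>R (e + t *\<^sub>R X))
      has_vector_derivative hpq_conn_deriv p q e X U V) (at 0)"
    apply (rule has_vector_derivative_eq_rhs)
     apply (rule dline da db dc has_vector_derivative_add has_vector_derivative_scaleR
        has_vector_derivative_const)+
    unfolding hpq_conn_deriv_def Let_def al0 bi0 s_def[symmetric] x_def[symmetric] uE_def[symmetric]
      vE_def[symmetric] uX_def[symmetric] vX_def[symmetric] uv_def[symmetric]
    by (simp add: algebra_simps)
  then show ?thesis unfolding line .
qed

lemma vdder_LC_hpq_fib: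
  fixes e X U V :: "'a::real_inner"
  assumes e: "1 + q*inner e e > 0"
  shows "vdder (\<lambda>x. LC (hpq_fib p q) x U V) e X = hpq_conn_deriv p q e X U V"
proof -
  define S where "S = {t::real. 0 < 1 + q*inner (e + t *\<^sub>R X) (e + t *\<^sub>R X)}"
  have "open S" unfolding S_def
    by (rule open_Collect_less) (auto intro!: continuous_intros)
  moreover have "0 \<in> S" using e unfolding S_def by simp
  ultimately have "((\<lambda>t. LC (hpq_fib p q) (e + t *\<^sub>R X) U V) has_vector_derivative
      hpq_conn_deriv p q e X U V) (at 0)"
    by (rule has_vector_derivative_transform_within_open[OF hpq_conn_has_vector_derivative[OF e]])
      (simp add: S_def LC_hpq_fib)
  then show ?thesis unfolding vdder_def by (rule vector_derivative_at)
qed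

lemma curv_hpq_fib:
  fixes e X Y :: "'a::real_inner"
  assumes e: "1 + q*inner e e > 0"
  shows "curv (hpq_fib p q) e X Y Y =
    hpq_conn_deriv p q e X Y Y + hpq_conn p q e X (hpq_conn p q e Y Y)
    - (hpq_conn_deriv p q e Y X Y + hpq_conn p q e Y (hpq_conn p q e X Y))"
  unfolding curv_def cov_def vdder_LC_hpq_fib[OF e] LC_hpq_fib[OF e] ..

definition gram :: "'a::real_inner \<Rightarrow> 'a \<Rightarrow> real" where
  "gram X Y = inner X X * inner Y Y - (inner X Y)^2"

definition gram_proj :: "'a::real_inner \<Rightarrow> 'a \<Rightarrow> 'a \<Rightarrow> real" where
  "gram_proj e X Y = (inner X e)^2 * inner Y Y + (inner Y e)^2 * inner X X
     - 2 * inner X e * inner Y e * inner X Y"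

definition radial_poly :: "real \<Rightarrow> real \<Rightarrow> real \<Rightarrow> real" where
  "radial_poly p q s = q*(1-p) * s^2 + q*(2+p) * s + (2*p+q)"

definition orth_poly :: "real \<Rightarrow> real \<Rightarrow> real \<Rightarrow> real" where
  "orth_poly p q s = q * s^2 + (1+2*q-(1-p)^2) * s + (2*p+q)"

lemma radial_poly_eq: "radial_poly p q s = p*(p-2+q-q * s) * s + orth_poly p q s"
  unfolding radial_poly_def orth_poly_def by (simp add: power2_eq_square algebra_simps)

lemma hpq_fib_curv:
  fixes e X Y :: "'a::real_inner"
  assumes e: "1 + q*inner e e > 0"
  defines "s \<equiv> inner e e"
  shows "hpq_fib p q e (curv (hpq_fib p q) e X Y Y) X = omega e powr p *
    (p*(p-2+q-q * s)*gram_proj e X Y + orth_poly p q s*gram X Y) / ((1+s)^2*(1+q * s))"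
proof -
  define R where "R = 1/(1+s)"
  define B where "B = 1/(1+q * s)"
  have "1 + s > 0" unfolding s_def by (simp add: add_pos_nonneg)
  then have r: "R * (1 + s) = 1" "B * (1 + q * s) = 1" using e by (auto simp: R_def B_def s_def)
  have d: "\<And>z. z/(1+s) = z*R" "\<And>z. z/(1+q * s) = z*B" "\<And>z. z/(1+s)^2 = z*R^2"
    "\<And>z. z/(1+q * s)^2 = z*B^2" "\<And>z. z/((1+s)^2*(1+q * s)) = z*R^2*B"
    by (auto simp: R_def B_def power2_eq_square)
  have c: "inner e e = s" "inner e X = inner X e" "inner e Y = inner Y e" "inner Y X = inner X Y"
    by (simp_all add: s_def inner_commute)
  show ?thesis
    unfolding curv_hpq_fib[OF e] hpq_fib_def hpq_conn_deriv_def hpq_conn_def Let_def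
      gram_def gram_proj_def orth_poly_def
    apply (simp only: inner_add_left inner_diff_left inner_scaleR_left
        inner_add_right inner_diff_right inner_scaleR_right c d)
    using r by algebra
qed

lemma hpq_fib_gram:
  "hpq_fib p q e X X * hpq_fib p q e Y Y - (hpq_fib p q e X Y)^2
     = (omega e powr p)^2 * (gram X Y + q * gram_proj e X Y)"
  unfolding hpq_fib_def gram_def gram_proj_def
  by (simp add: inner_commute power2_eq_square algebra_simps)

lemma sec_curv_hpq_fib:
  fixes e X Y :: "'a::real_inner"
  assumes e: "1 + q*inner e e > 0"
  defines "s \<equiv> inner e e"
  shows "sec_curv (hpq_fib p q) e X Y =
    (p*(p-2+q-q * s)*gram_proj e X Y + orth_poly p q s*gram X Y)
    / (omega e powr p * (1+s)^2 * (1+q * s) * (gram X Y + q * gram_proj e X Y))"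
proof -
  have "omega e powr p \<noteq> 0" using omega_pos[of e] by simp
  then show ?thesis
    unfolding sec_curv_def hpq_fib_curv[OF e] hpq_fib_gram s_def
    by (simp add: power2_eq_square)
qed

lemma sec_curv_hpq_fib_pos_iff:
  fixes e X Y :: "'a::real_inner"
  assumes e: "1 + q*inner e e > 0" and den: "gram X Y + q * gram_proj e X Y > 0"
  defines "s \<equiv> inner e e"
  shows "sec_curv (hpq_fib p q) e X Y > 0 \<longleftrightarrow>
    p*(p-2+q-q * s)*gram_proj e X Y + orth_poly p q s*gram X Y > 0"
proof -
  have "1 + s > 0" unfolding s_def by (simp add: add_pos_nonneg)
  then have "omega e powr p * (1+s)^2 * (1+q * s) * (gram X Y + q * gram_proj e X Y) > 0"
    using e den omega_pos[of e] unfolding s_def by simp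
  then show ?thesis
    unfolding sec_curv_hpq_fib[OF e] s_def by (simp add: zero_less_divide_iff)
qed

lemma gram_pos:
  fixes X Y :: "'a::real_inner"
  assumes "independent {X, Y}" "X \<noteq> Y"
  shows "gram X Y > 0"
proof -
  have Y: "Y \<noteq> 0" using assms(1) dependent_zero by blast
  have X: "X \<notin> span {Y}" using assms by (simp add: independent_insert)
  define c where "c = inner X Y / inner Y Y"
  have cY: "c * inner Y Y = inner X Y" unfolding c_def using Y by simp
  have "X - c *\<^sub>R Y \<noteq> 0"
    using X span_base[of Y "{Y}"] span_scale[of Y "{Y}" c] by auto
  then have "inner (X - c *\<^sub>R Y) (X - c *\<^sub>R Y) * inner Y Y > 0" using Y by simp
  also have "inner (X - c *\<^sub>R Y) (X - c *\<^sub>R Y) * inner Y Y = gram X Y"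
    unfolding gram_def inner_diff_left inner_diff_right inner_scaleR_left inner_scaleR_right
      inner_commute[of Y X] cY[symmetric]
    by (simp add: power2_eq_square algebra_simps)
  finally show ?thesis .
qed

lemma gram_proj_eq_norm:
  "gram_proj e X Y = (norm (inner X e *\<^sub>R Y - inner Y e *\<^sub>R X))^2"
  unfolding gram_proj_def power2_norm_eq_inner
  by (simp add: inner_diff_left inner_diff_right inner_commute power2_eq_square algebra_simps)

lemma gram_proj_nonneg: "gram_proj e X Y \<ge> 0"
  unfolding gram_proj_eq_norm by simp

lemma gram_proj_le:
  fixes e X Y :: "'a::real_inner"
  shows "gram_proj e X Y \<le> inner e e * gram X Y"
proof -
  define P where "P = gram_proj e X Y"
  define Q where "Q = (inner Y Y * inner X e - inner X Y * inner Y e) *\<^sub>R X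
    + (inner X X * inner Y e - inner X Y * inner X e) *\<^sub>R Y"
  have c: "inner Y X = inner X Y" "inner e X = inner X e" "inner e Y = inner Y e"
    by (simp_all add: inner_commute)
  have Qe: "inner Q e = P" unfolding Q_def P_def gram_proj_def
    by (simp only: inner_add_left inner_scaleR_left c) algebra
  have QQ: "inner Q Q = gram X Y * P" unfolding Q_def P_def gram_proj_def gram_def
    by (simp only: inner_add_left inner_add_right inner_scaleR_left inner_scaleR_right c) algebra
  show ?thesis
  proof (cases "P = 0")
    case True
    then show ?thesis using Cauchy_Schwarz_ineq[of X Y] unfolding P_def gram_def by simp
  next
    case False
    then have "P > 0" using gram_proj_nonneg unfolding P_def by (simp add: order_less_le)
    moreover have "P * P \<le> (gram X Y * inner e e) * P"
      using Cauchy_Schwarz_ineq[of Q e] unfolding Qe QQ by (simp add: power2_eq_square algebra_simps)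
    ultimately show ?thesis unfolding P_def by (simp add: algebra_simps)
  qed
qed

lemma gram_proj_in_span:
  fixes e X Y :: "'a::real_inner"
  assumes "e \<in> span {X, Y}"
  shows "gram_proj e X Y = inner e e * gram X Y"
proof -
  obtain a b where e: "e = a *\<^sub>R X + b *\<^sub>R Y"
    using assms unfolding span_insert span_singleton by (auto simp: algebra_simps)
  show ?thesis unfolding e gram_proj_def gram_def
    by (simp only: inner_add_left inner_add_right inner_scaleR_left inner_scaleR_right
        inner_commute[of Y X]) algebra
qed

lemma sec_curv_numerator_pos:
  fixes G P s :: real
  assumes G: "G > 0" and P: "0 \<le> P" "P \<le> s*G"
    and Q: "radial_poly p q s > 0" and T: "orth_poly p q s > 0"
  shows "p*(p-2+q-q * s)*P + orth_poly p q s*G > 0"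
proof (cases "s = 0")
  case True
  then show ?thesis using P G T by simp
next
  case False
  have "s * G \<ge> 0" using P by linarith
  then have s: "s > 0" using False G by (simp add: zero_le_mult_iff)
  have "s * (p*(p-2+q-q * s)*P + orth_poly p q s*G)
      = radial_poly p q s * P + orth_poly p q s * (s*G - P)"
    unfolding radial_poly_eq by (simp add: algebra_simps)
  also have "\<dots> > 0"
  proof (cases "P = 0")
    case True
    then show ?thesis using T s G by simp
  next
    case False
    then show ?thesis using P Q T by (simp add: add_pos_nonneg)
  qed
  finally show ?thesis using s by (simp add: zero_less_mult_iff)
qed

lemma sec_curv_hpq_fib_pos:
  fixes e X Y :: "'a::real_inner"
  assumes e: "1 + q*inner e e > 0" and XY: "independent {X, Y}" "X \<noteq> Y"
    and Q: "radial_poly p q (inner e e) > 0"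
    and T: "e \<in> span {X, Y} \<or> orth_poly p q (inner e e) > 0"
  shows "sec_curv (hpq_fib p q) e X Y > 0"
proof -
  define s where "s = inner e e"
  have G: "gram X Y > 0" by (rule gram_pos[OF XY])
  have P: "0 \<le> gram_proj e X Y" "gram_proj e X Y \<le> s * gram X Y"
    unfolding s_def by (rule gram_proj_nonneg, rule gram_proj_le)
  have "gram X Y + q * gram_proj e X Y > 0"
  proof (cases "q \<ge> 0")
    case True
    then show ?thesis using G P by (simp add: add_pos_nonneg)
  next
    case False
    then have "q * gram_proj e X Y \<ge> q * (s * gram X Y)" using P by (simp add: mult_left_mono_neg)
    moreover have "gram X Y * (1 + q * s) > 0" using G e unfolding s_def by simp
    ultimately show ?thesis by (simp add: algebra_simps)
  qed
  moreover have "p*(p-2+q-q * s)*gram_proj e X Y + orth_poly p q s*gram X Y > 0"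
    using T
  proof
    assume span: "e \<in> span {X, Y}"
    have "p*(p-2+q-q * s)*gram_proj e X Y + orth_poly p q s*gram X Y = radial_poly p q s * gram X Y"
      unfolding gram_proj_in_span[OF span] s_def radial_poly_eq by (simp add: algebra_simps)
    then show ?thesis using Q G unfolding s_def by simp
  next
    assume "orth_poly p q (inner e e) > 0"
    then show ?thesis using sec_curv_numerator_pos[OF G P] Q unfolding s_def by simp
  qed
  ultimately show ?thesis using sec_curv_hpq_fib_pos_iff[OF e] unfolding s_def by blast
qed

lemma sec_curv_hpq_fib_radial_plane:
  fixes X Y :: "'a::real_inner"
  assumes XY: "inner X X = 1" "inner Y Y = 1" "inner X Y = 0" and s: "s \<ge> 0" "1 + q * s > 0"
  shows "sec_curv (hpq_fib p q) (sqrt s *\<^sub>R X) X Y > 0 \<longleftrightarrow> radial_poly p q s > 0"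
proof -
  have ee: "inner (sqrt s *\<^sub>R X) (sqrt s *\<^sub>R X) = s" using XY s by simp
  have gp: "gram_proj (sqrt s *\<^sub>R X) X Y = s" and g: "gram X Y = 1"
    unfolding gram_proj_def gram_def using XY s by (simp_all add: inner_commute)
  show ?thesis
    using sec_curv_hpq_fib_pos_iff[of q "sqrt s *\<^sub>R X" X Y p] s
    unfolding ee gp g radial_poly_eq by (simp add: algebra_simps)
qed

lemma sec_curv_hpq_fib_orth_plane:
  fixes e X Y :: "'a::real_inner"
  assumes XY: "inner X X = 1" "inner Y Y = 1" "inner X Y = 0"
    and e: "inner X e = 0" "inner Y e = 0" "1 + q*inner e e > 0"
  shows "sec_curv (hpq_fib p q) e X Y > 0 \<longleftrightarrow> orth_poly p q (inner e e) > 0"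
proof -
  have "gram_proj e X Y = 0" and "gram X Y = 1"
    unfolding gram_proj_def gram_def using XY e by simp_all
  then show ?thesis using sec_curv_hpq_fib_pos_iff[OF e(3), of X Y p] by simp
qed

lemma quadratic_pos_of_discrim_neg:
  fixes a b c x :: real
  assumes "a > 0" "b^2 < 4*a*c"
  shows "a*x^2 + b*x + c > 0"
proof -
  have "4*a*(a*x^2 + b*x + c) = (2*a*x + b)^2 + (4*a*c - b^2)"
    by (simp add: power2_eq_square algebra_simps)
  also have "\<dots> > 0" using assms(2) by (smt (verit) zero_le_power2)
  finally show ?thesis using assms(1) by (simp add: zero_less_mult_iff)
qed

lemma discrim_neg_of_pos_at_vertex:
  fixes a b c :: real
  assumes "a > 0" "a*(-b/(2*a))^2 + b*(-b/(2*a)) + c > 0"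
  shows "b^2 < 4*a*c"
proof -
  have "4*a*(a*(-b/(2*a))^2 + b*(-b/(2*a)) + c) = 4*a*c - b^2"
    using assms(1) by (simp add: power2_eq_square field_simps)
  moreover have "4*a*(a*(-b/(2*a))^2 + b*(-b/(2*a)) + c) > 0" using assms by simp
  ultimately show ?thesis by simp
qed

lemma quadratic_neg_somewhere:
  fixes a b c :: real
  assumes "a < 0"
  obtains x where "x \<ge> 1" "a*x^2 + b*x + c < 0"
proof -
  define K where "K = \<bar>b\<bar> + \<bar>c\<bar>"
  define x where "x = K/(-a) + 1"
  have x: "x \<ge> 1" unfolding x_def K_def using assms by (simp add: divide_nonneg_neg)
  have "\<bar>c\<bar> \<le> \<bar>c\<bar>*x" using x by (simp add: mult_le_cancel_left1)
  then have "c \<le> \<bar>c\<bar>*x" by linarith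
  moreover have "b*x \<le> \<bar>b\<bar>*x" using x by (simp add: mult_right_mono)
  ultimately have "a*x^2 + b*x + c \<le> x*(a*x + K)"
    unfolding K_def by (simp add: power2_eq_square algebra_simps)
  also have "a*x + K = a" unfolding x_def using assms by (simp add: field_simps)
  finally show ?thesis using that x assms by (smt (verit) mult_pos_neg)
qed

text \<open>For q < 0 the values of |e|^2 on BMq q fill [0, -1/q).\<close>

lemma exists_admissible_neg:
  fixes f :: "real \<Rightarrow> real"
  assumes q: "q < 0" and f: "isCont f (-1/q)" "f (-1/q) < 0"
  obtains s where "s \<ge> 0" "1 + q * s > 0" "f s < 0"
proof -
  define s0 where "s0 = -1/q"
  have s0: "s0 > 0" unfolding s0_def using q by simp
  have "eventually (\<lambda>s. f s < 0) (at s0)"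
    using f unfolding s0_def isCont_def by (rule order_tendstoD(2))
  then obtain d where d: "d > 0" "\<And>s. s \<noteq> s0 \<and> dist s s0 < d \<Longrightarrow> f s < 0"
    unfolding eventually_at by auto
  define s where "s = s0 - min d s0 / 2"
  have s: "0 < s" "s < s0" "dist s s0 < d" using d s0 unfolding s_def dist_real_def by (auto simp: min_def)
  have "q * s > q * s0" using s q by simp
  moreover have "q * s0 = -1" unfolding s0_def using q by simp
  ultimately show ?thesis using that[of s] s d(2)[of s] by auto
qed

lemma isCont_radial_poly: "isCont (radial_poly p q) s"
  unfolding radial_poly_def[abs_def] by (intro continuous_intros)

lemma isCont_orth_poly: "isCont (orth_poly p q) s"
  unfolding orth_poly_def[abs_def] by (intro continuous_intros)

text \<open>The boundary q = lam p of Gamma_plus is where this discriminant changes sign.\<close>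

lemma radial_poly_discrim:
  "(q*(2+p))^2 - 4*(q*(1-p))*(2*p+q) = q*p*(q*(8+p) - 8*(1-p::real))"
  by (simp add: power2_eq_square algebra_simps)

lemma less_lam_iff: "8 + p > 0 \<Longrightarrow> q > lam p \<longleftrightarrow> q*(8+p) > 8*(1-p)"
  unfolding lam_def by (simp add: divide_less_eq)

lemma radial_poly_pos_of_Gamma':
  assumes G: "(p, q) \<in> Gamma'" and s: "s \<ge> 0" "1 + q * s > 0"
  shows "radial_poly p q s > 0"
proof -
  consider (minus) "p + q \<ge> 1" "q < 0" | (zero) "q = 0" "p > 0"
    | (plus1) "-8 < p" "p \<le> -2" "q > lam p" | (plus2) "-2 \<le> p" "p \<le> 0" "2*p + q > 0"
    | (plus3) "0 \<le> p" "p \<le> 1" "q > 0"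
    using G unfolding Gamma'_def Gamma_minus'_def Gamma_Z'_def Gamma_plus_def by auto
  then show ?thesis
  proof cases
    case minus
    have "2 + q * s - q * s^2 > 0" using minus s by (smt (verit) mult_nonpos_nonneg zero_le_power2)
    then have "(p+q-1)*(2 + q * s - q * s^2) \<ge> 0" using minus by simp
    moreover have "(1 + q * s)*(2 + q * s - q) > 0" using s minus by simp
    moreover have "radial_poly p q s = (1 + q * s)*(2 + q * s - q) + (p+q-1)*(2 + q * s - q * s^2)"
      unfolding radial_poly_def by (simp add: power2_eq_square algebra_simps)
    ultimately show ?thesis by linarith
  next
    case zero
    then show ?thesis unfolding radial_poly_def by simp
  next
    case plus1
    have "lam p > 0" unfolding lam_def using plus1 by simp
    then have q: "q > 0" using plus1 by simp
    have "q*(8+p) > 8*(1-p)" using plus1 less_lam_iff by simp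
    moreover have "q*p < 0" using q plus1 by (simp add: mult_pos_neg)
    ultimately have "q*p*(q*(8+p) - 8*(1-p)) < 0" by (simp add: mult_neg_pos)
    then show ?thesis
      unfolding radial_poly_def using quadratic_pos_of_discrim_neg q plus1 radial_poly_discrim
      by (smt (verit) mult_pos_pos)
  next
    case plus2
    then have "q*(2+p) * s \<ge> 0" "q*(1-p) * s^2 \<ge> 0" using s by simp_all
    then show ?thesis unfolding radial_poly_def using plus2 by linarith
  next
    case plus3
    then have "q*(2+p) * s \<ge> 0" "q*(1-p) * s^2 \<ge> 0" using s by simp_all
    then show ?thesis unfolding radial_poly_def using plus3 by linarith
  qed
qed

lemma one_le_of_radial_poly_pos:
  assumes H: "\<forall>s\<ge>0. 1 + q * s > 0 \<longrightarrow> radial_poly p q s > 0" and q: "q < 0"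
  shows "p + q \<ge> 1"
proof (rule ccontr)
  assume "\<not> p + q \<ge> 1"
  then have "(q-1)*(p+q-1) > 0" using q by (simp add: mult_neg_neg)
  moreover have "radial_poly p q (-1/q) * q = (q-1)*(p+q-1)"
    unfolding radial_poly_def using q by (simp add: power2_eq_square field_simps)
  ultimately have "radial_poly p q (-1/q) < 0" using q by (smt (verit) mult_nonneg_nonpos)
  then obtain s where "s \<ge> 0" "1 + q * s > 0" "radial_poly p q s < 0"
    using exists_admissible_neg[OF q isCont_radial_poly] by blast
  then show False using H by force
qed

lemma Gamma_plus_of_radial_poly_pos:
  assumes H: "\<forall>s\<ge>0. 1 + q * s > 0 \<longrightarrow> radial_poly p q s > 0" and q: "q > 0"
  shows "(p, q) \<in> Gamma_plus"
proof -
  have adm: "radial_poly p q s > 0" if "s \<ge> 0" for s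
    using H that q by (simp add: add_pos_nonneg)
  have "2*p + q > 0" using adm[of 0] unfolding radial_poly_def by simp
  moreover have "p \<le> 1"
  proof (rule ccontr)
    assume "\<not> p \<le> 1"
    then have "q*(1-p) < 0" using q by (simp add: mult_pos_neg)
    then obtain s where "s \<ge> 1" "radial_poly p q s < 0"
      unfolding radial_poly_def by (rule quadratic_neg_somewhere)
    then show False using adm[of s] by simp
  qed
  moreover have "-8 < p \<and> q > lam p" if p: "p < -2"
  proof -
    have a: "q*(1-p) > 0" using q p by simp
    have "q*(2+p) < 0" using q p by (simp add: mult_pos_neg)
    then have v: "-(q*(2+p))/(2*(q*(1-p))) \<ge> 0" using a by (intro divide_nonneg_pos) auto
    have "(q*(2+p))^2 < 4*(q*(1-p))*(2*p+q)"
      using discrim_neg_of_pos_at_vertex[OF a adm[OF v, unfolded radial_poly_def]] by simp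
    then have "q*p*(q*(8+p) - 8*(1-p)) < 0" using radial_poly_discrim[of q p] by simp
    moreover have "q*p < 0" using q p by (simp add: mult_pos_neg)
    ultimately have qq: "q*(8+p) > 8*(1-p)" by (simp add: mult_less_0_iff)
    then have "8 + p > 0" using q p by (smt (verit) mult_nonneg_nonpos)
    then show ?thesis using qq less_lam_iff by simp
  qed
  ultimately show ?thesis unfolding Gamma_plus_def using q by (cases "p \<le> -2"; cases "p \<le> 0") auto
qed

lemma radial_poly_pos_iff_Gamma':
  "(\<forall>s\<ge>0. 1 + q * s > 0 \<longrightarrow> radial_poly p q s > 0) \<longleftrightarrow> (p, q) \<in> Gamma'"
proof
  assume H: "\<forall>s\<ge>0. 1 + q * s > 0 \<longrightarrow> radial_poly p q s > 0"
  have "2*p + q > 0" using H[rule_format, of 0] unfolding radial_poly_def by simp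
  then consider "q = 0" "p > 0" | "q < 0" | "q > 0" by linarith
  then show "(p, q) \<in> Gamma'"
    unfolding Gamma'_def Gamma_minus'_def Gamma_Z'_def
    by cases (use one_le_of_radial_poly_pos[OF H] Gamma_plus_of_radial_poly_pos[OF H] in auto)
qed (use radial_poly_pos_of_Gamma' in blast)

lemma orth_poly_pos_of_Gamma:
  assumes G: "(p, q) \<in> Gamma" and s: "s \<ge> 0" "1 + q * s > 0"
  shows "orth_poly p q s > 0"
proof -
  consider (minus) "p + q = 1" "q < 0" | (zero) "q = 0" "p > 0" "p \<le> 2"
    | (plus1) "-8 < p" "p \<le> -2" "q > lam p" | (plus2) "-2 \<le> p" "p \<le> 0" "2*p + q > 0"
    | (plus3) "0 \<le> p" "p \<le> 1" "q > 0"
    using G unfolding Gamma_def Gamma_minus_def Gamma_Z_def Gamma_plus_def by auto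
  then show ?thesis
  proof cases
    case minus
    then have p: "p = 1 - q" by simp
    have "orth_poly p q s = (1 + q * s)*(2 + s - q)"
      unfolding orth_poly_def p by (simp add: power2_eq_square algebra_simps)
    then show ?thesis using s minus by simp
  next
    case zero
    then have "orth_poly p q s = p*(2-p) * s + 2*p"
      unfolding orth_poly_def by (simp add: power2_eq_square algebra_simps)
    moreover have "p*(2-p) * s \<ge> 0" using zero s by simp
    ultimately show ?thesis using zero by simp
  next
    case plus1
    have "lam p > 0" unfolding lam_def using plus1 by simp
    then have q: "q > 0" using plus1 by simp
    have "(p-2)^2*(8+p) = 32*(1-p) + p*(p+2)^2" by (simp add: power2_eq_square algebra_simps)
    also have "\<dots> \<le> 32*(1-p)" using plus1 by (simp add: mult_nonpos_nonneg)
    also have "\<dots> < 4*q*(8+p)" using plus1 less_lam_iff by simp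
    finally have "(p-2)^2 < 4*q" using plus1 by simp
    then have "p^2 * ((p-2)^2 - 4*q) < 0" using plus1 by (simp add: mult_pos_neg)
    moreover have "(1+2*q-(1-p)^2)^2 - 4*q*(2*p+q) = p^2 * ((p-2)^2 - 4*q)"
      by (simp add: power2_eq_square algebra_simps)
    ultimately have "(1+2*q-(1-p)^2)^2 - 4*q*(2*p+q) < 0" by simp
    then show ?thesis unfolding orth_poly_def using quadratic_pos_of_discrim_neg q by simp
  next
    case plus2
    have "1 + 2*q - (1-p)^2 \<ge> (-p)*(2+p)" using plus2 by (simp add: power2_eq_square algebra_simps)
    moreover have "(-p)*(2+p) \<ge> 0" using plus2 by (intro mult_nonneg_nonneg) auto
    ultimately have "(1 + 2*q - (1-p)^2) * s \<ge> 0" using s by simp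
    moreover have "q * s^2 \<ge> 0" using plus2 by simp
    ultimately show ?thesis unfolding orth_poly_def using plus2 by linarith
  next
    case plus3
    have "1 + 2*q - (1-p)^2 = 2*q + p*(2-p)" by (simp add: power2_eq_square algebra_simps)
    also have "\<dots> \<ge> 0" using plus3 by simp
    finally have "(1 + 2*q - (1-p)^2) * s \<ge> 0" using s by simp
    moreover have "q * s^2 \<ge> 0" using plus3 by simp
    ultimately show ?thesis unfolding orth_poly_def using plus3 by linarith
  qed
qed

lemma polys_pos_iff_Gamma:
  "(\<forall>s\<ge>0. 1 + q * s > 0 \<longrightarrow> radial_poly p q s > 0 \<and> orth_poly p q s > 0) \<longleftrightarrow> (p, q) \<in> Gamma"
proof
  assume H: "\<forall>s\<ge>0. 1 + q * s > 0 \<longrightarrow> radial_poly p q s > 0 \<and> orth_poly p q s > 0"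
  then have "(p, q) \<in> Gamma'" using radial_poly_pos_iff_Gamma' by blast
  then consider "p + q \<ge> 1" "q < 0" | "q = 0" "p > 0" | "(p, q) \<in> Gamma_plus"
    unfolding Gamma'_def Gamma_minus'_def Gamma_Z'_def by auto
  then show "(p, q) \<in> Gamma"
  proof cases
    case 1
    have "p + q = 1"
    proof (rule ccontr)
      assume "p + q \<noteq> 1"
      then have "((p+q-1)/q)^2 > 0" using 1 by simp
      moreover have "orth_poly p q (-1/q) * (-1/q) = - (((p+q-1)/q)^2)"
        unfolding orth_poly_def using 1 by (simp add: power2_eq_square field_simps)
      ultimately have "orth_poly p q (-1/q) / q > 0" by simp
      then have "orth_poly p q (-1/q) < 0" using 1 by (simp add: zero_less_divide_iff)
      then obtain s where "s \<ge> 0" "1 + q * s > 0" "orth_poly p q s < 0"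
        using exists_admissible_neg[OF 1(2) isCont_orth_poly] by blast
      then show False using H by force
    qed
    then show ?thesis using 1 unfolding Gamma_def Gamma_minus_def by simp
  next
    case 2
    have "p \<le> 2"
    proof (rule ccontr)
      assume "\<not> p \<le> 2"
      define s where "s = 2/(p-2) + 1"
      have "s \<ge> 0" "orth_poly p q s = -p*(p-2)"
        unfolding orth_poly_def s_def using 2 \<open>\<not> p \<le> 2\<close>
        by (simp_all add: power2_eq_square field_simps)
      moreover have "p*(p-2) > 0" using 2 \<open>\<not> p \<le> 2\<close> by simp
      ultimately show False using H 2 by force
    qed
    then show ?thesis using 2 unfolding Gamma_def Gamma_Z_def by simp
  qed (simp add: Gamma_def)
next
  assume "(p, q) \<in> Gamma"
  moreover have "Gamma \<subseteq> Gamma'"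
    unfolding Gamma_def Gamma'_def Gamma_minus_def Gamma_minus'_def Gamma_Z_def Gamma_Z'_def by auto
  ultimately show "\<forall>s\<ge>0. 1 + q * s > 0 \<longrightarrow> radial_poly p q s > 0 \<and> orth_poly p q s > 0"
    using radial_poly_pos_iff_Gamma' orth_poly_pos_of_Gamma by blast
qed

lemma BMq_iff: "(e::'a::real_inner) \<in> BMq q \<longleftrightarrow> 1 + q * inner e e > 0"
  unfolding BMq_def by (simp add: power2_norm_eq_inner, linarith)

lemma obtain_Basis_2:
  assumes "DIM('a::euclidean_space) \<ge> 2"
  obtains b1 b2 :: "'a::euclidean_space" where "b1 \<in> Basis" "b2 \<in> Basis" "b1 \<noteq> b2"
proof -
  obtain A :: "'a set" where "A \<subseteq> Basis" "card A = 2" using ex_card[OF assms] by blast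
  then show ?thesis using that unfolding card_2_iff by blast
qed

lemma obtain_Basis_3:
  assumes "DIM('a::euclidean_space) \<ge> 3"
  obtains b1 b2 b3 :: "'a::euclidean_space" where "b1 \<in> Basis" "b2 \<in> Basis" "b3 \<in> Basis"
    "b1 \<noteq> b2" "b1 \<noteq> b3" "b2 \<noteq> b3"
proof -
  obtain A :: "'a set" where "A \<subseteq> Basis" "card A = 3" using ex_card[OF assms] by blast
  then show ?thesis using that unfolding card_3_iff by blast
qed

lemma independent_Basis_pair:
  "b1 \<in> Basis \<Longrightarrow> b2 \<in> Basis \<Longrightarrow> independent {b1, b2}"
  by (rule independent_mono[OF independent_Basis]) auto

lemma radial_poly_pos_of_vertical_sec_curv_pos:
  fixes p q s :: real
  assumes "DIM('a::euclidean_space) \<ge> 2"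
    and H: "\<forall>e::'a. e \<in> BMq q \<longrightarrow> (\<forall>X Y::'a. independent {X, Y} \<and> X \<noteq> Y \<longrightarrow>
      sec_curv (hpq_fib p q) e X Y > 0)"
    and s: "s \<ge> 0" "1 + q * s > 0"
  shows "radial_poly p q s > 0"
proof -
  obtain b1 b2 :: 'a where b: "b1 \<in> Basis" "b2 \<in> Basis" "b1 \<noteq> b2"
    using obtain_Basis_2[OF assms(1)] by blast
  have "sqrt s *\<^sub>R b1 \<in> BMq q" unfolding BMq_iff using b s by (simp add: inner_Basis)
  then have "sec_curv (hpq_fib p q) (sqrt s *\<^sub>R b1) b1 b2 > 0"
    using H independent_Basis_pair[OF b(1,2)] b(3) by blast
  then show ?thesis
    using sec_curv_hpq_fib_radial_plane[of b1 b2 s q p] b s by (simp add: inner_Basis)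
qed

lemma orth_poly_pos_of_vertical_sec_curv_pos:
  fixes p q s :: real
  assumes "DIM('a::euclidean_space) \<ge> 3"
    and H: "\<forall>e::'a. e \<in> BMq q \<longrightarrow> (\<forall>X Y::'a. independent {X, Y} \<and> X \<noteq> Y \<longrightarrow>
      sec_curv (hpq_fib p q) e X Y > 0)"
    and s: "s \<ge> 0" "1 + q * s > 0"
  shows "orth_poly p q s > 0"
proof -
  obtain b1 b2 b3 :: 'a where b: "b1 \<in> Basis" "b2 \<in> Basis" "b3 \<in> Basis"
    "b1 \<noteq> b2" "b1 \<noteq> b3" "b2 \<noteq> b3"
    using obtain_Basis_3[OF assms(1)] by blast
  define e where "e = sqrt s *\<^sub>R b1"
  have e: "inner e e = s" "inner b2 e = 0" "inner b3 e = 0"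
    unfolding e_def using b s by (auto simp: inner_Basis)
  then have "e \<in> BMq q" unfolding BMq_iff using s by simp
  then have "sec_curv (hpq_fib p q) e b2 b3 > 0"
    using H independent_Basis_pair[OF b(2,3)] b(6) by blast
  then show ?thesis
    using sec_curv_hpq_fib_orth_plane[of b2 b3 e q p] b e s by (simp add: inner_Basis)
qed

lemma in_span_pair_of_DIM_2:
  fixes e X Y :: "'a::euclidean_space"
  assumes "DIM('a) = 2" "independent {X, Y}" "X \<noteq> Y"
  shows "e \<in> span {X, Y}"
proof -
  have "dim (UNIV :: 'a set) \<le> card {X, Y}" using assms by (simp add: dim_UNIV)
  then have "UNIV \<subseteq> span {X, Y}"
    using card_ge_dim_independent[of "{X, Y}" UNIV] assms(2) by auto
  then show ?thesis by auto
qed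

lemma vertical_sec_curv_pos_iff:
  fixes p q :: real
  assumes "DIM('a::euclidean_space) \<ge> 2"
  shows "(\<forall>e::'a. e \<in> BMq q \<longrightarrow> (\<forall>X Y::'a. independent {X, Y} \<and> X \<noteq> Y \<longrightarrow>
      sec_curv (hpq_fib p q) e X Y > 0))
    \<longleftrightarrow> (\<forall>s\<ge>0. 1 + q * s > 0 \<longrightarrow> radial_poly p q s > 0 \<and> (DIM('a) \<ge> 3 \<longrightarrow> orth_poly p q s > 0))"
proof
  assume "\<forall>e::'a. e \<in> BMq q \<longrightarrow> (\<forall>X Y::'a. independent {X, Y} \<and> X \<noteq> Y \<longrightarrow>
      sec_curv (hpq_fib p q) e X Y > 0)"
  then show "\<forall>s\<ge>0. 1 + q * s > 0 \<longrightarrow> radial_poly p q s > 0 \<and> (DIM('a) \<ge> 3 \<longrightarrow> orth_poly p q s > 0)"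
    using radial_poly_pos_of_vertical_sec_curv_pos[OF assms] orth_poly_pos_of_vertical_sec_curv_pos
    by blast
next
  assume H: "\<forall>s\<ge>0. 1 + q * s > 0 \<longrightarrow> radial_poly p q s > 0 \<and> (DIM('a) \<ge> 3 \<longrightarrow> orth_poly p q s > 0)"
  show "\<forall>e::'a. e \<in> BMq q \<longrightarrow> (\<forall>X Y::'a. independent {X, Y} \<and> X \<noteq> Y \<longrightarrow>
      sec_curv (hpq_fib p q) e X Y > 0)"
  proof (intro allI impI, elim conjE)
    fix e X Y :: 'a
    assume e: "e \<in> BMq q" and XY: "independent {X, Y}" "X \<noteq> Y"
    have "1 + q * inner e e > 0" using e unfolding BMq_iff .
    moreover have "e \<in> span {X, Y} \<or> orth_poly p q (inner e e) > 0"
      using H calculation in_span_pair_of_DIM_2[OF _ XY] assms by force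
    ultimately show "sec_curv (hpq_fib p q) e X Y > 0"
      using sec_curv_hpq_fib_pos[OF _ XY] H by simp
  qed
qed

theorem theorem2p8:
  fixes p q :: real
  shows "(DIM('a::euclidean_space) \<ge> 3 \<longrightarrow>
           ((\<forall>e::'a. e \<in> BMq q \<longrightarrow> (\<forall>X Y::'a. independent {X, Y} \<and> X \<noteq> Y \<longrightarrow>
               sec_curv (hpq_fib p q) e X Y > 0)) \<longleftrightarrow> (p, q) \<in> Gamma))
       \<and> (DIM('a) = 2 \<longrightarrow>
           ((\<forall>e::'a. e \<in> BMq q \<longrightarrow> (\<forall>X Y::'a. independent {X, Y} \<and> X \<noteq> Y \<longrightarrow>
               sec_curv (hpq_fib p q) e X Y > 0)) \<longleftrightarrow> (p, q) \<in> Gamma'))"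
proof (intro conjI impI)
  assume "DIM('a) \<ge> 3"
  then show "(\<forall>e::'a. e \<in> BMq q \<longrightarrow> (\<forall>X Y::'a. independent {X, Y} \<and> X \<noteq> Y \<longrightarrow>
      sec_curv (hpq_fib p q) e X Y > 0)) \<longleftrightarrow> (p, q) \<in> Gamma"
    using vertical_sec_curv_pos_iff[where 'a='a and p=p and q=q] polys_pos_iff_Gamma by simp
next
  assume "DIM('a) = 2"
  then show "(\<forall>e::'a. e \<in> BMq q \<longrightarrow> (\<forall>X Y::'a. independent {X, Y} \<and> X \<noteq> Y \<longrightarrow>
      sec_curv (hpq_fib p q) e X Y > 0)) \<longleftrightarrow> (p, q) \<in> Gamma'"
    using vertical_sec_curv_pos_iff[where 'a='a and p=p and q=q] radial_poly_pos_iff_Gamma' by simp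
qed

end
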